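(* In the setting below, let $f,g\in[0,\infty)^{n\times p}$ and let $W(g)$ be the weight matrix computed at $g$. If $\sum_{i,j}W(g)_{ij}f_{ij}\le\sum_{i,j}W(g)_{ij}g_{ij}$, then $\mathcal L(f)\le\mathcal L(g)$.
   Context: Let $M=(m_{ij})\in\{0,1\}^{n\times p}$, $m_i=\sum_jm_{ij}\ge1$ for all $i$, $m=\sum_im_i$, and fix constants $\hat\sigma_{1,j}>0$, $\hat\sigma_2>0$. For $0<b<c$ and $q_1,q_2>0$ with $q_1\tanh(q_2(c-b))=b$, let $d=b^2/2+(q_1/q_2)\ln\cosh(q_2(c-b))$ and $\rho_{b,c}(z)=z^2/2$ if $|z|\le b$, $d-(q_1/q_2)\ln\cosh(q_2(c-|z|))$ if $b\le|z|\le c$, $d$ if $|z|\ge c$. Let $\rho_1=\rho_{b_1,c_1}$, $\rho_2=\rho_{b_2,c_2}$ (each with admissible constants), $\psi_k=\rho_k'$, $w_k(z)=\psi_k(z)/z$ ($z\ne0$), $w_k(0)=1$, and $h_k(z)=\rho_k(\sqrt z)$. For $f\in[0,\infty)^{n\times p}$, $$\mathcal L(f)=\frac{\hat\sigma_2^2}{m}\sum_{i=1}^n m_i\,h_2\!\Big(\frac{1}{m_i\hat\sigma_2^2}\sum_{j=1}^p m_{ij}\hat\sigma_{1,j}^2\,h_1\big(f_{ij}/\hat\sigma_{1,j}^2\big)\Big).$$ For $g\in[0,\infty)^{n\times p}$ let $t_i(g)=\sqrt{\frac1{m_i}\sum_jm_{ij}\hat\sigma_{1,j}^2h_1(g_{ij}/\hat\sigma_{1,j}^2)}$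 and $W(g)_{ij}=m_{ij}\,w_1\big(\sqrt{g_{ij}}/\hat\sigma_{1,j}\big)\,w_2\big(t_i(g)/\hat\sigma_2\big)$. *)

theory Defs
  imports "HOL-Analysis.Analysis"
begin

definition admissible :: "real \<Rightarrow> real \<Rightarrow> real \<Rightarrow> real \<Rightarrow> bool" where
  "admissible b c q1 q2 \<longleftrightarrow> 0 < b \<and> b < c \<and> 0 < q1 \<and> 0 < q2 \<and> q1 * tanh (q2 * (c - b)) = b"

definition rho_d :: "real \<Rightarrow> real \<Rightarrow> real \<Rightarrow> real \<Rightarrow> real" where
  "rho_d b c q1 q2 = b\<^sup>2 / 2 + (q1 / q2) * ln (cosh (q2 * (c - b)))"

definition rho :: "real \<Rightarrow> real \<Rightarrow> real \<Rightarrow> real \<Rightarrow> real \<Rightarrow> real" where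
  "rho b c q1 q2 z =
     (if \<bar>z\<bar> \<le> b then z\<^sup>2 / 2
      else if \<bar>z\<bar> \<le> c then rho_d b c q1 q2 - (q1 / q2) * ln (cosh (q2 * (c - \<bar>z\<bar>)))
      else rho_d b c q1 q2)"

definition psi :: "real \<Rightarrow> real \<Rightarrow> real \<Rightarrow> real \<Rightarrow> real \<Rightarrow> real" where
  "psi b c q1 q2 z = deriv (rho b c q1 q2) z"

definition wfun :: "real \<Rightarrow> real \<Rightarrow> real \<Rightarrow> real \<Rightarrow> real \<Rightarrow> real" where
  "wfun b c q1 q2 z = (if z = 0 then 1 else psi b c q1 q2 z / z)"

definition hfun :: "real \<Rightarrow> real \<Rightarrow> real \<Rightarrow> real \<Rightarrow> real \<Rightarrow> real" where
  "hfun b c q1 q2 z = rho b c q1 q2 (sqrt z)"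

definition mrow :: "nat \<Rightarrow> (nat \<Rightarrow> nat \<Rightarrow> real) \<Rightarrow> nat \<Rightarrow> real" where
  "mrow p M i = (\<Sum>j<p. M i j)"

definition mtot :: "nat \<Rightarrow> nat \<Rightarrow> (nat \<Rightarrow> nat \<Rightarrow> real) \<Rightarrow> real" where
  "mtot n p M = (\<Sum>i<n. mrow p M i)"

text \<open>The loss L(f). Parameters: (b1,c1,q11,q21) for rho_1, (b2,c2,q12,q22) for rho_2,
  s1 j = sigma_{1,j}, s2 = sigma_2.\<close>
definition Lfun ::
  "nat \<Rightarrow> nat \<Rightarrow> (nat \<Rightarrow> nat \<Rightarrow> real) \<Rightarrow> (nat \<Rightarrow> real) \<Rightarrow> real \<Rightarrow>
   real \<Rightarrow> real \<Rightarrow> real \<Rightarrow> real \<Rightarrow> real \<Rightarrow> real \<Rightarrow> real \<Rightarrow> real \<Rightarrow>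
   (nat \<Rightarrow> nat \<Rightarrow> real) \<Rightarrow> real" where
  "Lfun n p M s1 s2 b1 c1 q11 q21 b2 c2 q12 q22 f =
     s2\<^sup>2 / mtot n p M *
     (\<Sum>i<n. mrow p M i *
        hfun b2 c2 q12 q22
          ((1 / (mrow p M i * s2\<^sup>2)) *
           (\<Sum>j<p. M i j * (s1 j)\<^sup>2 * hfun b1 c1 q11 q21 (f i j / (s1 j)\<^sup>2))))"

definition tfun ::
  "nat \<Rightarrow> (nat \<Rightarrow> nat \<Rightarrow> real) \<Rightarrow> (nat \<Rightarrow> real) \<Rightarrow>
   real \<Rightarrow> real \<Rightarrow> real \<Rightarrow> real \<Rightarrow> (nat \<Rightarrow> nat \<Rightarrow> real) \<Rightarrow> nat \<Rightarrow> real" where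
  "tfun p M s1 b1 c1 q11 q21 g i =
     sqrt ((1 / mrow p M i) *
           (\<Sum>j<p. M i j * (s1 j)\<^sup>2 * hfun b1 c1 q11 q21 (g i j / (s1 j)\<^sup>2)))"

definition Wmat ::
  "nat \<Rightarrow> (nat \<Rightarrow> nat \<Rightarrow> real) \<Rightarrow> (nat \<Rightarrow> real) \<Rightarrow> real \<Rightarrow>
   real \<Rightarrow> real \<Rightarrow> real \<Rightarrow> real \<Rightarrow> real \<Rightarrow> real \<Rightarrow> real \<Rightarrow> real \<Rightarrow>
   (nat \<Rightarrow> nat \<Rightarrow> real) \<Rightarrow> nat \<Rightarrow> nat \<Rightarrow> real" where
  "Wmat p M s1 s2 b1 c1 q11 q21 b2 c2 q12 q22 g i j =
     M i j * wfun b1 c1 q11 q21 (sqrt (g i j) / s1 j)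
           * wfun b2 c2 q12 q22 (tfun p M s1 b1 c1 q11 q21 g i / s2)"

end

theory Submission
  imports Defs
begin

text \<open>For each admissible \<open>\<rho>\<close>, the function \<open>h(z) = \<rho>(\<surd>z)\<close> has derivative
  \<open>w(\<surd>z)/2\<close> on \<open>(0,\<infinity>)\<close>, and \<open>w(s) = \<psi>(s)/s\<close> is nonincreasing; hence \<open>h\<close> is concave
  on \<open>[0,\<infinity>)\<close> and lies below its tangents. Linearising the inner \<open>h\<^sub>1\<close> and then the outer,
  nondecreasing \<open>h\<^sub>2\<close> at \<open>g\<close> gives the majorisation
  \<open>\<L>(f) \<le> \<L>(g) + \<langle>W(g), f - g\<rangle> / (4m)\<close>, so a step that does not increase the weighted
  quadratic \<open>\<langle>W(g), \<cdot>\<rangle>\<close> does not increase \<open>\<L>\<close>.\<close>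

lemma DERIV_glue_Icc:
  fixes f g h :: "real \<Rightarrow> real"
  assumes "a < x" "x < d"
    and "\<And>y. a \<le> y \<Longrightarrow> y \<le> x \<Longrightarrow> f y = g y"
    and "\<And>y. x \<le> y \<Longrightarrow> y \<le> d \<Longrightarrow> f y = h y"
    and "(g has_real_derivative D) (at x)" "(h has_real_derivative D) (at x)"
  shows "(f has_real_derivative D) (at x)"
proof -
  have "((\<lambda>y. (f y - f x) / (y - x)) \<longlongrightarrow> D) (at_left x)"
  proof (rule Lim_transform_eventually)
    show "((\<lambda>y. (g y - g x) / (y - x)) \<longlongrightarrow> D) (at_left x)"
      using has_field_derivative_at_within[OF assms(5)] by (simp add: has_field_derivative_iff)
    show "\<forall>\<^sub>F y in at_left x. (g y - g x) / (y - x) = (f y - f x) / (y - x)"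
      using eventually_at_left_real[OF assms(1)] by eventually_elim (use assms(1,3) in auto)
  qed
  moreover have "((\<lambda>y. (f y - f x) / (y - x)) \<longlongrightarrow> D) (at_right x)"
  proof (rule Lim_transform_eventually)
    show "((\<lambda>y. (h y - h x) / (y - x)) \<longlongrightarrow> D) (at_right x)"
      using has_field_derivative_at_within[OF assms(6)] by (simp add: has_field_derivative_iff)
    show "\<forall>\<^sub>F y in at_right x. (h y - h x) / (y - x) = (f y - f x) / (y - x)"
      using eventually_at_right_real[OF assms(2)] by eventually_elim (use assms(2,4) in auto)
  qed
  ultimately show ?thesis
    by (simp add: has_field_derivative_iff filterlim_at_split)
qed

definition rho_weight :: "real \<Rightarrow> real \<Rightarrow> real \<Rightarrow> real \<Rightarrow> real \<Rightarrow> real" where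
  "rho_weight b c q1 q2 z =
     (if z \<le> b then 1 else if z \<le> c then q1 * tanh (q2 * (c - z)) / z else 0)"

lemma rho_has_real_derivative:
  assumes adm: "admissible b c q1 q2" and s: "s \<ge> 0"
  shows "(rho b c q1 q2 has_real_derivative s * rho_weight b c q1 q2 s) (at s)"
proof -
  from adm have "0 < b" "b < c" "0 < q2" and tanh_b: "q1 * tanh (q2 * (c - b)) = b"
    by (auto simp: admissible_def)
  define B where "B y = rho_d b c q1 q2 - (q1 / q2) * ln (cosh (q2 * (c - y)))" for y
  have rho_quadratic: "rho b c q1 q2 y = y\<^sup>2 / 2" if "-b \<le> y" "y \<le> b" for y
    using that by (simp add: rho_def abs_le_iff)
  have rho_transition: "rho b c q1 q2 y = B y" if "b \<le> y" "y \<le> c" for y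
    using that \<open>0 < b\<close> by (cases "y = b") (auto simp: rho_def rho_d_def B_def)
  have rho_flat: "rho b c q1 q2 y = rho_d b c q1 q2" if "c \<le> y" for y
    using that rho_transition[of c] \<open>0 < b\<close> \<open>b < c\<close> by (cases "y = c") (auto simp: rho_def B_def)
  have d_quadratic: "((\<lambda>y. y\<^sup>2 / 2) has_real_derivative y) (at y)" for y
    by (auto intro!: derivative_eq_intros)
  have d_transition: "(B has_real_derivative q1 * tanh (q2 * (c - y))) (at y)" for y
    unfolding B_def using \<open>0 < q2\<close>
    by (auto intro!: derivative_eq_intros simp: tanh_def field_simps)
  consider "s < b" | "s = b" | "b < s" "s < c" | "s = c" | "c < s"
    by linarith
  \<comment> \<open>Admissibility says exactly that the slopes match at \<open>b\<close>; at \<open>c\<close> both vanish.\<close>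
  then show ?thesis
  proof cases
    case 1
    have "(rho b c q1 q2 has_real_derivative s) (at s)"
      by (rule DERIV_glue_Icc[of "-b" s b _ "\<lambda>y. y\<^sup>2 / 2" "\<lambda>y. y\<^sup>2 / 2"])
        (use 1 s rho_quadratic d_quadratic in auto)
    then show ?thesis
      using 1 by (simp add: rho_weight_def)
  next
    case 2
    have "(rho b c q1 q2 has_real_derivative b) (at b)"
      by (rule DERIV_glue_Icc[of 0 b c _ "\<lambda>y. y\<^sup>2 / 2" B])
        (use \<open>0 < b\<close> \<open>b < c\<close> rho_quadratic rho_transition d_quadratic d_transition[of b] tanh_b
          in auto)
    then show ?thesis
      using 2 by (simp add: rho_weight_def)
  next
    case 3
    have "(rho b c q1 q2 has_real_derivative q1 * tanh (q2 * (c - s))) (at s)"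
      by (rule DERIV_glue_Icc[of b s c _ B B]) (use 3 rho_transition d_transition in auto)
    then show ?thesis
      using 3 \<open>0 < b\<close> by (simp add: rho_weight_def)
  next
    case 4
    have "(rho b c q1 q2 has_real_derivative 0) (at c)"
      by (rule DERIV_glue_Icc[of b c "c + 1" _ B "\<lambda>_. rho_d b c q1 q2"])
        (use \<open>b < c\<close> rho_transition rho_flat d_transition[of c] in auto)
    then show ?thesis
      using 4 \<open>b < c\<close> by (simp add: rho_weight_def)
  next
    case 5
    have "(rho b c q1 q2 has_real_derivative 0) (at s)"
      by (rule DERIV_glue_Icc[of c s "s + 1" _ "\<lambda>_. rho_d b c q1 q2" "\<lambda>_. rho_d b c q1 q2"])
        (use 5 rho_flat in auto)
    then show ?thesis
      using 5 \<open>b < c\<close> by (simp add: rho_weight_def)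
  qed
qed

lemma wfun_eq_rho_weight:
  assumes "admissible b c q1 q2" and "z \<ge> 0"
  shows "wfun b c q1 q2 z = rho_weight b c q1 q2 z"
proof (cases "z = 0")
  case True
  then show ?thesis
    using assms(1) by (simp add: wfun_def rho_weight_def admissible_def)
next
  case False
  have "psi b c q1 q2 z = z * rho_weight b c q1 q2 z"
    unfolding psi_def by (rule DERIV_imp_deriv[OF rho_has_real_derivative[OF assms]])
  then show ?thesis
    using False by (simp add: wfun_def)
qed

lemma rho_weight_nonneg:
  assumes "admissible b c q1 q2"
  shows "rho_weight b c q1 q2 z \<ge> 0"
  using assms by (auto simp: rho_weight_def admissible_def)

lemma rho_weight_le_one:
  assumes "admissible b c q1 q2"
  shows "rho_weight b c q1 q2 z \<le> 1"
proof -
  from assms have "0 < b" "0 < q1" "0 < q2" and tanh_b: "q1 * tanh (q2 * (c - b)) = b"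
    by (auto simp: admissible_def)
  have "q1 * tanh (q2 * (c - z)) \<le> z" if "b < z"
  proof -
    have "q1 * tanh (q2 * (c - z)) \<le> q1 * tanh (q2 * (c - b))"
      using that \<open>0 < q1\<close> \<open>0 < q2\<close> by (simp add: mult_left_mono)
    then show ?thesis
      using tanh_b that by simp
  qed
  then show ?thesis
    using \<open>0 < b\<close> by (auto simp: rho_weight_def)
qed

lemma rho_weight_antimono:
  assumes adm: "admissible b c q1 q2" and "s \<le> t"
  shows "rho_weight b c q1 q2 t \<le> rho_weight b c q1 q2 s"
proof -
  from adm have "0 < b" "b < c" "0 < q1" "0 < q2"
    by (auto simp: admissible_def)
  consider "s \<le> b" | "b < s" "t \<le> c" | "c < t"
    by linarith
  then show ?thesis
  proof cases
    case 1
    then show ?thesis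
      using rho_weight_le_one[OF adm, of t] by (simp add: rho_weight_def)
  next
    case 2
    have "q1 * tanh (q2 * (c - t)) \<le> q1 * tanh (q2 * (c - s))"
      using \<open>s \<le> t\<close> \<open>0 < q1\<close> \<open>0 < q2\<close> by (simp add: mult_left_mono)
    then have "q1 * tanh (q2 * (c - t)) / t \<le> q1 * tanh (q2 * (c - s)) / s"
      using 2 \<open>s \<le> t\<close> \<open>0 < b\<close> \<open>0 < q1\<close> \<open>0 < q2\<close> by (intro frac_le) auto
    then show ?thesis
      using 2 \<open>s \<le> t\<close> by (simp add: rho_weight_def)
  next
    case 3
    then show ?thesis
      using rho_weight_nonneg[OF adm, of s] \<open>b < c\<close> by (simp add: rho_weight_def)
  qed
qed

lemma hfun_eq_half:
  assumes "admissible b c q1 q2" and "0 \<le> y" "y \<le> b\<^sup>2"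
  shows "hfun b c q1 q2 y = y / 2"
proof -
  have "sqrt y \<le> b"
    using real_sqrt_le_mono[OF assms(3)] assms(1) by (simp add: admissible_def)
  then show ?thesis
    using assms(2) by (simp add: hfun_def rho_def)
qed

lemma hfun_has_real_derivative:
  assumes adm: "admissible b c q1 q2" and "x > 0"
  shows "(hfun b c q1 q2 has_real_derivative rho_weight b c q1 q2 (sqrt x) / 2) (at x)"
proof -
  have "((\<lambda>x. rho b c q1 q2 (sqrt x)) has_real_derivative
          sqrt x * rho_weight b c q1 q2 (sqrt x) * (inverse (sqrt x) / 2)) (at x)"
    using DERIV_chain2[OF rho_has_real_derivative[OF adm] DERIV_real_sqrt] \<open>x > 0\<close> by simp
  then show ?thesis
    unfolding hfun_def[abs_def] by (rule DERIV_cong) (use \<open>x > 0\<close> in simp)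
qed

lemma hfun_nonneg:
  assumes adm: "admissible b c q1 q2" and "x \<ge> 0"
  shows "hfun b c q1 q2 x \<ge> 0"
proof -
  have "rho b c q1 q2 0 \<le> rho b c q1 q2 (sqrt x)"
  proof (rule DERIV_nonneg_imp_nondecreasing[where f = "rho b c q1 q2"])
    fix y :: real
    assume "0 \<le> y" "y \<le> sqrt x"
    then show "\<exists>d. (rho b c q1 q2 has_real_derivative d) (at y) \<and> d \<ge> 0"
      using rho_has_real_derivative[OF adm \<open>0 \<le> y\<close>] rho_weight_nonneg[OF adm, of y] by auto
  qed (use \<open>x \<ge> 0\<close> in simp)
  moreover have "rho b c q1 q2 0 = 0"
    using adm by (simp add: rho_def admissible_def)
  ultimately show ?thesis
    by (simp add: hfun_def)
qed

lemma hfun_le_tangent: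
  assumes adm: "admissible b c q1 q2" and "x \<ge> 0" "y \<ge> 0"
  shows "hfun b c q1 q2 y \<le> hfun b c q1 q2 x + rho_weight b c q1 q2 (sqrt x) / 2 * (y - x)"
proof -
  \<comment> \<open>Near 0, \<open>hfun z = \<bar>z\<bar>/2\<close>, which is not differentiable at 0; the linear continuation
    \<open>H\<close> is differentiable on \<open>\<real>\<close> with antitone derivative, hence concave.\<close>
  define H where "H z = (if z < 0 then z / 2 else hfun b c q1 q2 z)" for z
  have "0 < b"
    using adm by (simp add: admissible_def)
  have H_half: "H z = z / 2" if "z \<le> b\<^sup>2" for z
    using hfun_eq_half[OF adm _ that] by (simp add: H_def)
  have H_deriv: "(H has_real_derivative rho_weight b c q1 q2 (sqrt z) / 2) (at z)" for z
  proof (cases "z < b\<^sup>2")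
    case True
    have "sqrt z < b"
      using real_sqrt_less_mono[OF True] \<open>0 < b\<close> by simp
    then have "rho_weight b c q1 q2 (sqrt z) / 2 = 1 / 2"
      by (simp add: rho_weight_def)
    then have "((\<lambda>y. y / 2) has_real_derivative rho_weight b c q1 q2 (sqrt z) / 2) (at z)"
      using DERIV_cdivide[OF DERIV_ident, of 2 z] by simp
    then show ?thesis
      by (rule has_field_derivative_transform_within_open[where S = "{..<b\<^sup>2}"])
        (use True H_half in auto)
  next
    case False
    have "0 < b\<^sup>2"
      using \<open>0 < b\<close> by simp
    then have "z > 0"
      using False by linarith
    from hfun_has_real_derivative[OF adm this] show ?thesis
      by (rule has_field_derivative_transform_within_open[where S = "{0<..}"])
        (use \<open>z > 0\<close> in \<open>auto simp: H_def\<close>)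
  qed
  have "convex_on UNIV (\<lambda>z. - H z)"
  proof (rule convex_on_realI)
    show "((\<lambda>z. - H z) has_real_derivative - (rho_weight b c q1 q2 (sqrt z) / 2)) (at z)" for z
      using H_deriv[of z] by (rule DERIV_minus)
    show "- (rho_weight b c q1 q2 (sqrt s) / 2) \<le> - (rho_weight b c q1 q2 (sqrt t) / 2)"
      if "s \<le> t" for s t
      using rho_weight_antimono[OF adm real_sqrt_le_mono[OF that]] by simp
  qed simp
  then have "- H y - - H x \<ge> - (rho_weight b c q1 q2 (sqrt x) / 2) * (y - x)"
    by (rule convex_on_imp_above_tangent[OF _ connected_UNIV])
      (use DERIV_minus[OF H_deriv[of x]] in simp_all)
  then show ?thesis
    using assms(2,3) by (simp add: H_def)
qed

definition row_loss ::
  "nat \<Rightarrow> (nat \<Rightarrow> nat \<Rightarrow> real) \<Rightarrow> (nat \<Rightarrow> real) \<Rightarrow> real \<Rightarrow> real \<Rightarrow> real \<Rightarrow> real \<Rightarrow>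
   (nat \<Rightarrow> nat \<Rightarrow> real) \<Rightarrow> nat \<Rightarrow> real" where
  "row_loss p M s1 b c q1 q2 F i = (\<Sum>j<p. M i j * (s1 j)\<^sup>2 * hfun b c q1 q2 (F i j / (s1 j)\<^sup>2))"

lemma row_loss_nonneg:
  assumes "admissible b c q1 q2"
    and "\<And>j. j < p \<Longrightarrow> M i j \<ge> 0" "\<And>j. j < p \<Longrightarrow> F i j \<ge> 0"
  shows "row_loss p M s1 b c q1 q2 F i \<ge> 0"
  unfolding row_loss_def using assms by (intro sum_nonneg mult_nonneg_nonneg hfun_nonneg) auto

lemma row_loss_le_tangent:
  assumes adm: "admissible b c q1 q2"
    and M: "\<And>j. j < p \<Longrightarrow> M i j \<ge> 0" and s1: "\<And>j. j < p \<Longrightarrow> s1 j > 0"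
    and f: "\<And>j. j < p \<Longrightarrow> f i j \<ge> 0" and g: "\<And>j. j < p \<Longrightarrow> g i j \<ge> 0"
  shows "row_loss p M s1 b c q1 q2 f i \<le> row_loss p M s1 b c q1 q2 g i +
           (\<Sum>j<p. M i j * rho_weight b c q1 q2 (sqrt (g i j) / s1 j) / 2 * (f i j - g i j))"
proof -
  have "M i j * (s1 j)\<^sup>2 * hfun b c q1 q2 (f i j / (s1 j)\<^sup>2)
        \<le> M i j * (s1 j)\<^sup>2 * hfun b c q1 q2 (g i j / (s1 j)\<^sup>2)
          + M i j * rho_weight b c q1 q2 (sqrt (g i j) / s1 j) / 2 * (f i j - g i j)"
    if "j < p" for j
  proof -
    let ?w = "rho_weight b c q1 q2 (sqrt (g i j) / s1 j)"
    have "sqrt (g i j / (s1 j)\<^sup>2) = sqrt (g i j) / s1 j"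
      using s1[OF that] by (simp add: real_sqrt_divide)
    then have "hfun b c q1 q2 (f i j / (s1 j)\<^sup>2)
        \<le> hfun b c q1 q2 (g i j / (s1 j)\<^sup>2) + ?w / 2 * (f i j / (s1 j)\<^sup>2 - g i j / (s1 j)\<^sup>2)"
      using hfun_le_tangent[OF adm, of "g i j / (s1 j)\<^sup>2" "f i j / (s1 j)\<^sup>2"] f[OF that] g[OF that]
      by simp
    then have "M i j * (s1 j)\<^sup>2 * hfun b c q1 q2 (f i j / (s1 j)\<^sup>2)
        \<le> M i j * (s1 j)\<^sup>2 *
          (hfun b c q1 q2 (g i j / (s1 j)\<^sup>2) + ?w / 2 * (f i j / (s1 j)\<^sup>2 - g i j / (s1 j)\<^sup>2))"
      using M[OF that] by (intro mult_left_mono) auto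
    also have "\<dots> = M i j * (s1 j)\<^sup>2 * hfun b c q1 q2 (g i j / (s1 j)\<^sup>2)
        + M i j * ?w / 2 * (f i j - g i j)"
      using s1[OF that] by (simp add: field_simps)
    finally show ?thesis .
  qed
  then show ?thesis
    unfolding row_loss_def sum.distrib[symmetric] by (intro sum_mono) auto
qed

lemma tfun_div_eq:
  assumes "s2 > 0"
  shows "tfun p M s1 b c q1 q2 g i / s2
         = sqrt (row_loss p M s1 b c q1 q2 g i / (mrow p M i * s2\<^sup>2))"
  using assms by (simp add: tfun_def row_loss_def real_sqrt_divide real_sqrt_mult)

lemma Wmat_eq_rho_weight:
  assumes adm1: "admissible b1 c1 q11 q21" and adm2: "admissible b2 c2 q12 q22"
    and "mrow p M i > 0" "s2 > 0" "j < p"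
    and M: "\<And>j. j < p \<Longrightarrow> M i j \<ge> 0" and s1: "\<And>j. j < p \<Longrightarrow> s1 j > 0"
    and g: "\<And>j. j < p \<Longrightarrow> g i j \<ge> 0"
  shows "Wmat p M s1 s2 b1 c1 q11 q21 b2 c2 q12 q22 g i j
         = M i j * rho_weight b1 c1 q11 q21 (sqrt (g i j) / s1 j)
             * rho_weight b2 c2 q12 q22
                 (sqrt (row_loss p M s1 b1 c1 q11 q21 g i / (mrow p M i * s2\<^sup>2)))"
proof -
  have "row_loss p M s1 b1 c1 q11 q21 g i / (mrow p M i * s2\<^sup>2) \<ge> 0"
    using row_loss_nonneg[OF adm1, of p M i g s1] M g \<open>mrow p M i > 0\<close> by simp
  moreover have "sqrt (g i j) / s1 j \<ge> 0"
    using g[OF \<open>j < p\<close>] s1[OF \<open>j < p\<close>] by simp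
  ultimately show ?thesis
    by (simp add: Wmat_def tfun_div_eq[OF \<open>s2 > 0\<close>]
        wfun_eq_rho_weight[OF adm1] wfun_eq_rho_weight[OF adm2])
qed

lemma row_term_le_tangent:
  fixes m :: real
  assumes adm1: "admissible b1 c1 q11 q21" and adm2: "admissible b2 c2 q12 q22"
    and "m > 0" "s2 > 0"
    and M: "\<And>j. j < p \<Longrightarrow> M i j \<ge> 0" and s1: "\<And>j. j < p \<Longrightarrow> s1 j > 0"
    and f: "\<And>j. j < p \<Longrightarrow> f i j \<ge> 0" and g: "\<And>j. j < p \<Longrightarrow> g i j \<ge> 0"
  defines "u F \<equiv> row_loss p M s1 b1 c1 q11 q21 F i / (m * s2\<^sup>2)"
  shows "m * hfun b2 c2 q12 q22 (u f)
         \<le> m * hfun b2 c2 q12 q22 (u g)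
           + (\<Sum>j<p. M i j * rho_weight b1 c1 q11 q21 (sqrt (g i j) / s1 j)
                 * rho_weight b2 c2 q12 q22 (sqrt (u g)) * (f i j - g i j)) / (4 * s2\<^sup>2)"
proof -
  let ?w1 = "\<lambda>j. rho_weight b1 c1 q11 q21 (sqrt (g i j) / s1 j)"
  let ?w2 = "rho_weight b2 c2 q12 q22 (sqrt (u g))"
  let ?S = "\<Sum>j<p. M i j * ?w1 j / 2 * (f i j - g i j)"
  have u_nonneg: "u F \<ge> 0" if "\<And>j. j < p \<Longrightarrow> F i j \<ge> 0" for F
    using row_loss_nonneg[OF adm1, of p M i F s1] M that \<open>m > 0\<close> by (simp add: u_def)
  have "u f - u g = (row_loss p M s1 b1 c1 q11 q21 f i - row_loss p M s1 b1 c1 q11 q21 g i) / (m * s2\<^sup>2)"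
    by (simp add: u_def diff_divide_distrib)
  also have "\<dots> \<le> ?S / (m * s2\<^sup>2)"
    using row_loss_le_tangent[OF adm1, of p M i s1 f g] M s1 f g \<open>m > 0\<close>
    by (intro divide_right_mono) auto
  finally have du: "u f - u g \<le> ?S / (m * s2\<^sup>2)" .
  have "hfun b2 c2 q12 q22 (u f) \<le> hfun b2 c2 q12 q22 (u g) + ?w2 / 2 * (u f - u g)"
    using hfun_le_tangent[OF adm2] u_nonneg f g by simp
  also have "\<dots> \<le> hfun b2 c2 q12 q22 (u g) + ?w2 / 2 * (?S / (m * s2\<^sup>2))"
    using du rho_weight_nonneg[OF adm2] by (intro add_left_mono mult_left_mono) auto
  finally have "m * hfun b2 c2 q12 q22 (u f)
      \<le> m * (hfun b2 c2 q12 q22 (u g) + ?w2 / 2 * (?S / (m * s2\<^sup>2)))"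
    using \<open>m > 0\<close> by simp
  also have "\<dots> = m * hfun b2 c2 q12 q22 (u g) + ?w2 * ?S / (2 * s2\<^sup>2)"
  proof -
    have "m * (a + w / 2 * (S / (m * s2\<^sup>2))) = m * a + w * S / (2 * s2\<^sup>2)" for a w S :: real
      using \<open>m > 0\<close> \<open>s2 > 0\<close> by (simp add: field_simps)
    then show ?thesis .
  qed
  also have "\<dots> = m * hfun b2 c2 q12 q22 (u g)
      + (\<Sum>j<p. M i j * ?w1 j * ?w2 * (f i j - g i j)) / (4 * s2\<^sup>2)"
    by (simp add: sum_distrib_left sum_divide_distrib mult_ac)
  finally show ?thesis .
qed

lemma Lfun_le_majorizer:
  fixes M :: "nat \<Rightarrow> nat \<Rightarrow> real" and f g :: "nat \<Rightarrow> nat \<Rightarrow> real"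
  assumes M_nonneg: "\<And>i j. i < n \<Longrightarrow> j < p \<Longrightarrow> M i j \<ge> 0"
    and mrow_pos: "\<And>i. i < n \<Longrightarrow> mrow p M i > 0"
    and s1_pos: "\<And>j. j < p \<Longrightarrow> s1 j > 0" and s2_pos: "s2 > 0"
    and adm1: "admissible b1 c1 q11 q21" and adm2: "admissible b2 c2 q12 q22"
    and f_nonneg: "\<And>i j. i < n \<Longrightarrow> j < p \<Longrightarrow> f i j \<ge> 0"
    and g_nonneg: "\<And>i j. i < n \<Longrightarrow> j < p \<Longrightarrow> g i j \<ge> 0"
  shows "Lfun n p M s1 s2 b1 c1 q11 q21 b2 c2 q12 q22 f
         \<le> Lfun n p M s1 s2 b1 c1 q11 q21 b2 c2 q12 q22 g
           + (\<Sum>i<n. \<Sum>j<p. Wmat p M s1 s2 b1 c1 q11 q21 b2 c2 q12 q22 g i j * (f i j - g i j))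
             / (4 * mtot n p M)"
proof -
  define u where "u F i = row_loss p M s1 b1 c1 q11 q21 F i / (mrow p M i * s2\<^sup>2)" for F i
  define W where "W = Wmat p M s1 s2 b1 c1 q11 q21 b2 c2 q12 q22 g"
  have Lfun_eq: "Lfun n p M s1 s2 b1 c1 q11 q21 b2 c2 q12 q22 F
      = s2\<^sup>2 / mtot n p M * (\<Sum>i<n. mrow p M i * hfun b2 c2 q12 q22 (u F i))" for F
    by (simp add: Lfun_def u_def row_loss_def)
  have row_step: "mrow p M i * hfun b2 c2 q12 q22 (u f i)
      \<le> mrow p M i * hfun b2 c2 q12 q22 (u g i) + (\<Sum>j<p. W i j * (f i j - g i j)) / (4 * s2\<^sup>2)"
    if "i < n" for i
  proof -
    have "W i j = M i j * rho_weight b1 c1 q11 q21 (sqrt (g i j) / s1 j)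
                    * rho_weight b2 c2 q12 q22 (sqrt (u g i))" if "j < p" for j
      unfolding W_def u_def
      by (rule Wmat_eq_rho_weight[OF adm1 adm2 mrow_pos[OF \<open>i < n\<close>] s2_pos that])
        (use M_nonneg s1_pos g_nonneg \<open>i < n\<close> in auto)
    moreover have "mrow p M i * hfun b2 c2 q12 q22 (u f i)
      \<le> mrow p M i * hfun b2 c2 q12 q22 (u g i)
        + (\<Sum>j<p. M i j * rho_weight b1 c1 q11 q21 (sqrt (g i j) / s1 j)
             * rho_weight b2 c2 q12 q22 (sqrt (u g i)) * (f i j - g i j)) / (4 * s2\<^sup>2)"
      unfolding u_def
      by (rule row_term_le_tangent[OF adm1 adm2 mrow_pos[OF \<open>i < n\<close>] s2_pos])
        (use M_nonneg s1_pos f_nonneg g_nonneg \<open>i < n\<close> in auto)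
    ultimately show ?thesis
      by simp
  qed
  have "mtot n p M \<ge> 0"
    unfolding mtot_def using mrow_pos by (intro sum_nonneg) (simp add: less_imp_le)
  then have "s2\<^sup>2 / mtot n p M * (\<Sum>i<n. mrow p M i * hfun b2 c2 q12 q22 (u f i))
      \<le> s2\<^sup>2 / mtot n p M * (\<Sum>i<n. mrow p M i * hfun b2 c2 q12 q22 (u g i)
                                  + (\<Sum>j<p. W i j * (f i j - g i j)) / (4 * s2\<^sup>2))"
    using row_step by (intro mult_left_mono sum_mono) auto
  also have "\<dots> = s2\<^sup>2 / mtot n p M * (\<Sum>i<n. mrow p M i * hfun b2 c2 q12 q22 (u g i))
      + (\<Sum>i<n. \<Sum>j<p. W i j * (f i j - g i j)) / (4 * mtot n p M)"
    using s2_pos by (simp add: sum.distrib distrib_left sum_divide_distrib[symmetric])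
  finally show ?thesis
    unfolding Lfun_eq W_def .
qed

theorem lemma3:
  fixes n p :: nat and M :: "nat \<Rightarrow> nat \<Rightarrow> real" and s1 :: "nat \<Rightarrow> real" and s2 :: real
    and b1 c1 q11 q21 b2 c2 q12 q22 :: real
    and f g :: "nat \<Rightarrow> nat \<Rightarrow> real"
  assumes M01: "\<And>i j. i < n \<Longrightarrow> j < p \<Longrightarrow> M i j \<in> {0, 1}"
    and mrow_ge: "\<And>i. i < n \<Longrightarrow> mrow p M i \<ge> 1"
    and s1_pos: "\<And>j. j < p \<Longrightarrow> s1 j > 0"
    and s2_pos: "s2 > 0"
    and adm1: "admissible b1 c1 q11 q21"
    and adm2: "admissible b2 c2 q12 q22"
    and f_nonneg: "\<And>i j. i < n \<Longrightarrow> j < p \<Longrightarrow> f i j \<ge> 0"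
    and g_nonneg: "\<And>i j. i < n \<Longrightarrow> j < p \<Longrightarrow> g i j \<ge> 0"
    and hyp: "(\<Sum>i<n. \<Sum>j<p. Wmat p M s1 s2 b1 c1 q11 q21 b2 c2 q12 q22 g i j * f i j)
              \<le> (\<Sum>i<n. \<Sum>j<p. Wmat p M s1 s2 b1 c1 q11 q21 b2 c2 q12 q22 g i j * g i j)"
  shows "Lfun n p M s1 s2 b1 c1 q11 q21 b2 c2 q12 q22 f
         \<le> Lfun n p M s1 s2 b1 c1 q11 q21 b2 c2 q12 q22 g"
proof -
  let ?W = "Wmat p M s1 s2 b1 c1 q11 q21 b2 c2 q12 q22 g"
  have "(\<Sum>i<n. \<Sum>j<p. ?W i j * (f i j - g i j)) \<le> 0"
    using hyp by (simp add: right_diff_distrib sum_subtractf)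
  moreover have "mtot n p M \<ge> 0"
    unfolding mtot_def using mrow_ge by (intro sum_nonneg) (meson lessThan_iff order_trans zero_le_one)
  ultimately have "(\<Sum>i<n. \<Sum>j<p. ?W i j * (f i j - g i j)) / (4 * mtot n p M) \<le> 0"
    by (simp add: divide_nonpos_nonneg)
  moreover have "Lfun n p M s1 s2 b1 c1 q11 q21 b2 c2 q12 q22 f
      \<le> Lfun n p M s1 s2 b1 c1 q11 q21 b2 c2 q12 q22 g
        + (\<Sum>i<n. \<Sum>j<p. ?W i j * (f i j - g i j)) / (4 * mtot n p M)"
    using M01 mrow_ge
    by (intro Lfun_le_majorizer[OF _ _ s1_pos s2_pos adm1 adm2 f_nonneg g_nonneg]) force+
  ultimately show ?thesis
    by linarith
qed

end
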